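(* In the setting of the context (the canonical generalized multi-time Lagrange space associated with a quadratic multi-time Lagrangian, with its Cartan connection $C\Gamma$), the Ricci d-tensor $Ric(C\Gamma)$ has adapted components $$R_{\alpha\beta}=H_{\alpha\beta}=H^\mu_{\alpha\beta\mu},\quad R^{\ (\alpha)}_{i(j)}=P^{\ (\alpha)}_{i(j)}=-P^{m\ (\alpha)}_{im(j)}=0,\quad R^{(\alpha)}_{(i)j}=P^{(\alpha)}_{(i)j}=P^{m\ (\alpha)}_{ij(m)}=0,$$ $$R^{(\alpha)}_{(i)\beta}=P^{(\alpha)}_{(i)\beta}=P^{m\ (\alpha)}_{i\beta(m)}=0,\quad R^{(\alpha)(\beta)}_{(i)(j)}=S^{(\alpha)(\beta)}_{(i)(j)}=S^{m(\beta)(\alpha)}_{i(j)(m)}=0,\quad R_{i\alpha}=R^m_{i\alpha m},\quad R_{ij}=R^m_{ijm}.$$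
   Context: Setting: $T$ is a $p$-dimensional manifold (coordinates $t^\alpha$) with semi-Riemannian metric $h_{\alpha\beta}(t)$ and Christoffel symbols $H^\gamma_{\alpha\beta}$; $M$ is an $n$-dimensional manifold; on $J^1(T,M)$ (coordinates $(t^\alpha,x^i,x^i_\alpha)$) $L=G^{(\alpha)(\beta)}_{(i)(j)}(t,x)x^i_\alpha x^j_\beta+U^{(\alpha)}_{(i)}(t,x)x^i_\alpha+F(t,x)$ with $G^{(\alpha)(\beta)}_{(i)(j)}=\frac12\partial^2L/\partial x^i_\alpha\partial x^j_\beta$ symmetric, of rank $n$, constant signature in $i,j$; $g_{ij}=\frac1p h_{\mu\nu}G^{(\mu)(\nu)}_{(i)(j)}$ with inverse $g^{ij}$; $\Gamma^i_{jk}$ its generalized Christoffel symbols in $x$. Nonlinear connection $M^{(i)}_{(\alpha)\beta}=-H^\gamma_{\alpha\beta}x^i_\gamma$, $N^{(i)}_{(\alpha)j}=\Gamma^i_{jm}x^m_\alpha+\frac{g^{im}}{2}\frac{\partial g_{jm}}{\partial t^\alpha}$, adapted derivations $\frac{\delta}{\delta t^\alpha}=\partial_{t^\alpha}-M^{(j)}_{(\beta)\alpha}\partial_{x^j_\beta}$, $\frac{\delta}{\delta x^i}=\partial_{x^i}-N^{(j)}_{(\beta)i}\partial_{x^j_\beta}$. Cartan connection $C\Gamma=(H^\gamma_{\alpha\beta},G^k_{j\gamma},L^i_{jk},C^{i(\gamma)}_{j(k)})$ with $G^k_{j\gamma}=\frac{g^{km}}{2}\frac{\delta g_{mj}}{\delta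 t^\gamma}$, $L^i_{jk}=\frac{g^{im}}{2}(\frac{\delta g_{jm}}{\delta x^k}+\frac{\delta g_{km}}{\delta x^j}-\frac{\delta g_{jk}}{\delta x^m})$, $C^{i(\gamma)}_{j(k)}=\frac{g^{im}}{2}(\frac{\partial g_{jm}}{\partial x^k_\gamma}+\frac{\partial g_{km}}{\partial x^j_\gamma}-\frac{\partial g_{jk}}{\partial x^m_\gamma})$. Its curvature d-tensors are $H^\alpha_{\eta\beta\gamma}=\frac{\delta H^\alpha_{\eta\beta}}{\delta t^\gamma}-\frac{\delta H^\alpha_{\eta\gamma}}{\delta t^\beta}+H^\mu_{\eta\beta}H^\alpha_{\mu\gamma}-H^\mu_{\eta\gamma}H^\alpha_{\mu\beta}$; $R^l_{i\beta k}=\frac{\delta G^l_{i\beta}}{\delta x^k}-\frac{\delta L^l_{ik}}{\delta t^\beta}+G^m_{i\beta}L^l_{mk}-L^m_{ik}G^l_{m\beta}+C^{l(\mu)}_{i(m)}R^{(m)}_{(\mu)\beta k}$; $R^l_{ijk}=\frac{\delta L^l_{ij}}{\delta x^k}-\frac{\delta L^l_{ik}}{\delta x^j}+L^m_{ij}L^l_{mk}-L^m_{ik}L^l_{mj}+C^{l(\mu)}_{i(m)}R^{(m)}_{(\mu)jk}$; $P^{l\,(\gamma)}_{i\beta(k)}=\frac{\partial G^l_{i\beta}}{\partial x^k_\gamma}-C^{l(\gamma)}_{i(k)/\beta}+C^{l(\mu)}_{i(m)}P^{(m)(\gamma)}_{(\mu)\beta(k)}$; $P^{l\,(\gamma)}_{ij(k)}=\frac{\partial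 L^l_{ij}}{\partial x^k_\gamma}-C^{l(\gamma)}_{i(k)|j}+C^{l(\mu)}_{i(m)}P^{(m)(\gamma)}_{(\mu)j(k)}$; $S^{l(\beta)(\gamma)}_{i(j)(k)}=\frac{\partial C^{l(\beta)}_{i(j)}}{\partial x^k_\gamma}-\frac{\partial C^{l(\gamma)}_{i(k)}}{\partial x^j_\beta}+C^{m(\beta)}_{i(j)}C^{l(\gamma)}_{m(k)}-C^{m(\gamma)}_{i(k)}C^{l(\beta)}_{m(j)}$; here $R^{(m)}_{(\mu)\beta k}=\frac{\delta M^{(m)}_{(\mu)\beta}}{\delta x^k}-\frac{\delta N^{(m)}_{(\mu)k}}{\delta t^\beta}$, $R^{(m)}_{(\mu)jk}=\frac{\delta N^{(m)}_{(\mu)j}}{\delta x^k}-\frac{\delta N^{(m)}_{(\mu)k}}{\delta x^j}$, $P^{(m)(\gamma)}_{(\mu)\beta(k)}=\frac{\partial M^{(m)}_{(\mu)\beta}}{\partial x^k_\gamma}-\delta^\gamma_\mu G^m_{k\beta}+\delta^m_kH^\gamma_{\mu\beta}$, $P^{(m)(\gamma)}_{(\mu)j(k)}=\frac{\partial N^{(m)}_{(\mu)j}}{\partial x^k_\gamma}-\delta^\gamma_\mu L^m_{jk}$, and "$_{/\beta}$", "$_{|j}$" are the horizontal covariant derivatives of $C\Gamma$. The adapted components of the Ricci d-tensor are the contractions named by the middle expressions of the claim ($R_{\alpha\beta}=H^\mu_{\alpha\beta\mu}$, $R^{\ (\alpha)}_{i(j)}=-P^{m\ (\alpha)}_{im(j)}$,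 $R^{(\alpha)}_{(i)j}=P^{m\ (\alpha)}_{ij(m)}$, $R^{(\alpha)}_{(i)\beta}=P^{m\ (\alpha)}_{i\beta(m)}$, $R^{(\alpha)(\beta)}_{(i)(j)}=S^{m(\beta)(\alpha)}_{i(j)(m)}$, $R_{i\alpha}=R^m_{i\alpha m}$, $R_{ij}=R^m_{ijm}$). *)

theory Defs
  imports "HOL-Analysis.Analysis"
begin

text \<open>Local-coordinate model of J^1(T,M).  Time indices: type 'p (finite, p = CARD('p));
space indices: type 'n (finite, n = CARD('n)).  A point of J^1(T,M) has coordinates
(t, x, y) with t :: real^'p, x :: real^'n, y :: real^'n^'p, where y $ a $ i = x^i_a.\<close>

type_synonym ('p, 'n) jfun = "real^'p \<Rightarrow> real^'n \<Rightarrow> real^'n^'p \<Rightarrow> real"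

definition pder :: "('a::euclidean_space \<Rightarrow> real) \<Rightarrow> 'a \<Rightarrow> 'a \<Rightarrow> real" where
  "pder f v z = deriv (\<lambda>s. f (z + s *\<^sub>R v)) 0"

fun ipder :: "'a::euclidean_space list \<Rightarrow> ('a \<Rightarrow> real) \<Rightarrow> 'a \<Rightarrow> real" where
  "ipder [] f = f"
| "ipder (v # vs) f = pder (ipder vs f) v"

definition smooth_on :: "'a::euclidean_space set \<Rightarrow> ('a \<Rightarrow> real) \<Rightarrow> bool" where
  "smooth_on S f \<longleftrightarrow> (\<forall>vs. set vs \<subseteq> Basis \<longrightarrow>
      continuous_on S (ipder vs f) \<and>
      (\<forall>z\<in>S. \<forall>b\<in>Basis. (\<lambda>s. ipder vs f (z + s *\<^sub>R b)) differentiable (at 0)))"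

definition dt :: "'p::finite \<Rightarrow> ('p, 'n::finite) jfun \<Rightarrow> ('p, 'n) jfun" where
  "dt a f t x y = deriv (\<lambda>s. f (t + s *\<^sub>R axis a 1) x y) 0"

definition dx :: "'n::finite \<Rightarrow> ('p::finite, 'n) jfun \<Rightarrow> ('p, 'n) jfun" where
  "dx i f t x y = deriv (\<lambda>s. f t (x + s *\<^sub>R axis i 1) y) 0"

text \<open>dy a i f = partial f / partial x^i_a\<close>
definition dy :: "'p::finite \<Rightarrow> 'n::finite \<Rightarrow> ('p, 'n) jfun \<Rightarrow> ('p, 'n) jfun" where
  "dy a i f t x y = deriv (\<lambda>s. f t x (y + s *\<^sub>R axis a (axis i 1))) 0"

definition kd :: "'a \<Rightarrow> 'a \<Rightarrow> real" where
  "kd a b = (if a = b then 1 else 0)"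

text \<open>h :: real^'p => 'p => 'p => real is the metric h_{ab}(t) on T.\<close>

definition hinv :: "(real^'p \<Rightarrow> 'p \<Rightarrow> 'p \<Rightarrow> real) \<Rightarrow> real^'p \<Rightarrow> 'p::finite \<Rightarrow> 'p \<Rightarrow> real" where
  "hinv h t a b = matrix_inv (\<chi> c d. h t c d) $ a $ b"

text \<open>H c a b = H^c_{ab}, lifted to a function on J^1(T,M).\<close>
definition Hc :: "(real^'p \<Rightarrow> 'p \<Rightarrow> 'p \<Rightarrow> real) \<Rightarrow> 'p::finite \<Rightarrow> 'p \<Rightarrow> 'p \<Rightarrow> ('p, 'n::finite) jfun" where
  "Hc h c a b t x y = (1/2) * (\<Sum>m\<in>UNIV. hinv h t c m *
      (pder (\<lambda>t'. h t' m b) (axis a 1) t + pder (\<lambda>t'. h t' m a) (axis b 1) t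
       - pder (\<lambda>t'. h t' a b) (axis m 1) t))"

text \<open>Gq (t,x) a b i j = G^{(a)(b)}_{(i)(j)}(t,x).  The metric
  g_{ij} = (1/p) h_{ab} G^{(a)(b)}_{(i)(j)}, as a function on J^1(T,M).\<close>
definition gm :: "(real^'p \<Rightarrow> 'p \<Rightarrow> 'p \<Rightarrow> real) \<Rightarrow> ((real^'p) \<times> (real^'n) \<Rightarrow> 'p \<Rightarrow> 'p \<Rightarrow> 'n \<Rightarrow> 'n \<Rightarrow> real)
    \<Rightarrow> 'n::finite \<Rightarrow> 'n \<Rightarrow> ('p::finite, 'n) jfun" where
  "gm h Gq i j t x y = (1 / real CARD('p)) * (\<Sum>a\<in>UNIV. \<Sum>b\<in>UNIV. h t a b * Gq (t, x) a b i j)"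

text \<open>In the remaining definitions g :: 'n => 'n => jfun is the metric g_{ij}.\<close>

definition ginv :: "('n \<Rightarrow> 'n \<Rightarrow> ('p, 'n) jfun) \<Rightarrow> 'n::finite \<Rightarrow> 'n \<Rightarrow> ('p::finite, 'n) jfun" where
  "ginv g i j t x y = matrix_inv (\<chi> k l. g k l t x y) $ i $ j"

definition Gam :: "('n \<Rightarrow> 'n \<Rightarrow> ('p, 'n) jfun) \<Rightarrow> 'n::finite \<Rightarrow> 'n \<Rightarrow> 'n \<Rightarrow> ('p::finite, 'n) jfun" where
  "Gam g i j k t x y = (1/2) * (\<Sum>m\<in>UNIV. ginv g i m t x y *
      (dx k (g j m) t x y + dx j (g k m) t x y - dx m (g j k) t x y))"

text \<open>MM m a b = M^{(m)}_{(a)b}\<close>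
definition MM :: "(real^'p \<Rightarrow> 'p \<Rightarrow> 'p \<Rightarrow> real) \<Rightarrow> 'n::finite \<Rightarrow> 'p::finite \<Rightarrow> 'p \<Rightarrow> ('p, 'n) jfun" where
  "MM h m a b t x y = - (\<Sum>c\<in>UNIV. Hc h c a b t x y * y $ c $ m)"

text \<open>NN g m a j = N^{(m)}_{(a)j}\<close>
definition NN :: "('n \<Rightarrow> 'n \<Rightarrow> ('p, 'n) jfun) \<Rightarrow> 'n::finite \<Rightarrow> 'p::finite \<Rightarrow> 'n \<Rightarrow> ('p, 'n) jfun" where
  "NN g m a j t x y = (\<Sum>k\<in>UNIV. Gam g m j k t x y * y $ a $ k)
      + (1/2) * (\<Sum>k\<in>UNIV. ginv g m k t x y * dt a (g j k) t x y)"

definition deltat :: "(real^'p \<Rightarrow> 'p \<Rightarrow> 'p \<Rightarrow> real) \<Rightarrow> 'p::finite \<Rightarrow> ('p, 'n::finite) jfun \<Rightarrow> ('p, 'n) jfun" where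
  "deltat h a f t x y = dt a f t x y - (\<Sum>j\<in>UNIV. \<Sum>b\<in>UNIV. MM h j b a t x y * dy b j f t x y)"

definition deltax :: "('n \<Rightarrow> 'n \<Rightarrow> ('p, 'n) jfun) \<Rightarrow> 'n::finite \<Rightarrow> ('p::finite, 'n) jfun \<Rightarrow> ('p, 'n) jfun" where
  "deltax g i f t x y = dx i f t x y - (\<Sum>j\<in>UNIV. \<Sum>b\<in>UNIV. NN g j b i t x y * dy b j f t x y)"

text \<open>GG k j c = G^k_{jc}\<close>
definition GG :: "(real^'p \<Rightarrow> 'p \<Rightarrow> 'p \<Rightarrow> real) \<Rightarrow> ('n \<Rightarrow> 'n \<Rightarrow> ('p, 'n) jfun)
    \<Rightarrow> 'n::finite \<Rightarrow> 'n \<Rightarrow> 'p::finite \<Rightarrow> ('p, 'n) jfun" where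
  "GG h g k j c t x y = (1/2) * (\<Sum>m\<in>UNIV. ginv g k m t x y * deltat h c (g m j) t x y)"

text \<open>LL i j k = L^i_{jk}\<close>
definition LL :: "('n \<Rightarrow> 'n \<Rightarrow> ('p, 'n) jfun) \<Rightarrow> 'n::finite \<Rightarrow> 'n \<Rightarrow> 'n \<Rightarrow> ('p::finite, 'n) jfun" where
  "LL g i j k t x y = (1/2) * (\<Sum>m\<in>UNIV. ginv g i m t x y *
      (deltax g k (g j m) t x y + deltax g j (g k m) t x y - deltax g m (g j k) t x y))"

text \<open>CC i j c k = C^{i(c)}_{j(k)}\<close>
definition CC :: "('n \<Rightarrow> 'n \<Rightarrow> ('p, 'n) jfun) \<Rightarrow> 'n::finite \<Rightarrow> 'n \<Rightarrow> 'p::finite \<Rightarrow> 'n \<Rightarrow> ('p, 'n) jfun" where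
  "CC g i j c k t x y = (1/2) * (\<Sum>m\<in>UNIV. ginv g i m t x y *
      (dy c k (g j m) t x y + dy c j (g k m) t x y - dy c m (g j k) t x y))"

text \<open>Horizontal covariant derivatives of the d-tensor C^{l(c)}_{i(k)}:
  CslashT l i c k b = C^{l(c)}_{i(k)/b},  CbarX l i c k j = C^{l(c)}_{i(k)|j}.\<close>
definition CslashT :: "(real^'p \<Rightarrow> 'p \<Rightarrow> 'p \<Rightarrow> real) \<Rightarrow> ('n \<Rightarrow> 'n \<Rightarrow> ('p, 'n) jfun)
    \<Rightarrow> 'n::finite \<Rightarrow> 'n \<Rightarrow> 'p::finite \<Rightarrow> 'n \<Rightarrow> 'p \<Rightarrow> ('p, 'n) jfun" where
  "CslashT h g l i c k b t x y = deltat h b (CC g l i c k) t x y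
     + (\<Sum>m\<in>UNIV. CC g m i c k t x y * GG h g l m b t x y)
     - (\<Sum>m\<in>UNIV. CC g l m c k t x y * GG h g m i b t x y)
     - (\<Sum>m\<in>UNIV. CC g l i c m t x y * GG h g m k b t x y)
     + (\<Sum>u\<in>UNIV. CC g l i u k t x y * Hc h c u b t x y)"

definition CbarX :: "('n \<Rightarrow> 'n \<Rightarrow> ('p, 'n) jfun)
    \<Rightarrow> 'n::finite \<Rightarrow> 'n \<Rightarrow> 'p::finite \<Rightarrow> 'n \<Rightarrow> 'n \<Rightarrow> ('p, 'n) jfun" where
  "CbarX g l i c k j t x y = deltax g j (CC g l i c k) t x y
     + (\<Sum>m\<in>UNIV. CC g m i c k t x y * LL g l m j t x y)
     - (\<Sum>m\<in>UNIV. CC g l m c k t x y * LL g m i j t x y)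
     - (\<Sum>m\<in>UNIV. CC g l i c m t x y * LL g m k j t x y)"

text \<open>RMtx m u b k = R^{(m)}_{(u)bk};  RMxx m u j k = R^{(m)}_{(u)jk}\<close>
definition RMtx where
  "RMtx h g m u b k t x y = deltax g k (MM h m u b) t x y - deltat h b (NN g m u k) t x y"

definition RMxx where
  "RMxx h g m u j k t x y = deltax g k (NN g m u j) t x y - deltax g j (NN g m u k) t x y"

text \<open>PMt m u b c k = P^{(m)(c)}_{(u)b(k)};  PMx m u j c k = P^{(m)(c)}_{(u)j(k)}\<close>
definition PMt where
  "PMt h g m u b c k t x y = dy c k (MM h m u b) t x y - kd c u * GG h g m k b t x y
      + kd m k * Hc h c u b t x y"

definition PMx where
  "PMx g m u j c k t x y = dy c k (NN g m u j) t x y - kd c u * LL g m j k t x y"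

text \<open>HR a e b c = H^a_{ebc}\<close>
definition HR where
  "HR h a e b c t x y = deltat h c (Hc h a e b) t x y - deltat h b (Hc h a e c) t x y
     + (\<Sum>u\<in>UNIV. Hc h u e b t x y * Hc h a u c t x y - Hc h u e c t x y * Hc h a u b t x y)"

text \<open>Rtx l i b k = R^l_{ibk}\<close>
definition Rtx where
  "Rtx h g l i b k t x y = deltax g k (GG h g l i b) t x y - deltat h b (LL g l i k) t x y
     + (\<Sum>m\<in>UNIV. GG h g m i b t x y * LL g l m k t x y - LL g m i k t x y * GG h g l m b t x y)
     + (\<Sum>u\<in>UNIV. \<Sum>m\<in>UNIV. CC g l i u m t x y * RMtx h g m u b k t x y)"

text \<open>Rxx l i j k = R^l_{ijk}\<close>
definition Rxx where
  "Rxx h g l i j k t x y = deltax g k (LL g l i j) t x y - deltax g j (LL g l i k) t x y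
     + (\<Sum>m\<in>UNIV. LL g m i j t x y * LL g l m k t x y - LL g m i k t x y * LL g l m j t x y)
     + (\<Sum>u\<in>UNIV. \<Sum>m\<in>UNIV. CC g l i u m t x y * RMxx h g m u j k t x y)"

text \<open>Pt l i b c k = P^{l (c)}_{ib(k)}\<close>
definition Pt where
  "Pt h g l i b c k t x y = dy c k (GG h g l i b) t x y - CslashT h g l i c k b t x y
     + (\<Sum>u\<in>UNIV. \<Sum>m\<in>UNIV. CC g l i u m t x y * PMt h g m u b c k t x y)"

text \<open>Px l i j c k = P^{l (c)}_{ij(k)}\<close>
definition Px where
  "Px g l i j c k t x y = dy c k (LL g l i j) t x y - CbarX g l i c k j t x y
     + (\<Sum>u\<in>UNIV. \<Sum>m\<in>UNIV. CC g l i u m t x y * PMx g m u j c k t x y)"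

text \<open>SS l i b j c k = S^{l(b)(c)}_{i(j)(k)}\<close>
definition SS where
  "SS g l i b j c k t x y = dy c k (CC g l i b j) t x y - dy b j (CC g l i c k) t x y
     + (\<Sum>m\<in>UNIV. CC g m i b j t x y * CC g l m c k t x y - CC g m i c k t x y * CC g l m b j t x y)"

definition Ric_tt where "Ric_tt h a b t x y = (\<Sum>u\<in>UNIV. HR h u a b u t x y)"
definition Ric_yx where "Ric_yx g a i j t x y = - (\<Sum>m\<in>UNIV. Px g m i m a j t x y)"
definition Ric_xy where "Ric_xy g a i j t x y = (\<Sum>m\<in>UNIV. Px g m i j a m t x y)"
definition Ric_ty where "Ric_ty h g a i b t x y = (\<Sum>m\<in>UNIV. Pt h g m i b a m t x y)"
definition Ric_yy where "Ric_yy g a b i j t x y = (\<Sum>m\<in>UNIV. SS g m i b j a m t x y)"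
definition Ric_xt where "Ric_xt h g i a t x y = (\<Sum>m\<in>UNIV. Rtx h g m i a m t x y)"
definition Ric_xx where "Ric_xx h g i j t x y = (\<Sum>m\<in>UNIV. Rxx h g m i j m t x y)"

end

theory Submission
  imports Defs
begin

text \<open>For a quadratic Lagrangian the fundamental tensor g depends only on (t, x), not on the
fibre coordinates x^i_a of J^1(T,M). Hence the vertical part C of the Cartan connection
vanishes, while its horizontal coefficients L and G are again fibre-constant, so that their
vertical derivatives vanish. Each of P^{l(c)}_{ij(k)}, P^{l(c)}_{ib(k)} and S^{l(b)(c)}_{i(j)(k)}
is built from such vertical derivatives and from C, so all of them, and with them the
corresponding Ricci components, vanish identically.\<close>

definition vertically_constant :: "('p::finite, 'n::finite) jfun \<Rightarrow> bool" where
  "vertically_constant f \<longleftrightarrow> (\<forall>t x y y'. f t x y = f t x y')"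

lemma vertically_constantD: "vertically_constant f \<Longrightarrow> f t x y = f t x y'"
  unfolding vertically_constant_def by blast

lemma vertically_constant_const: "vertically_constant (\<lambda>t x y. c)"
  unfolding vertically_constant_def by simp

lemma dy_vertically_constant: "vertically_constant f \<Longrightarrow> dy c k f t x y = 0"
proof -
  assume "vertically_constant f"
  then have "(\<lambda>s. f t x (y + s *\<^sub>R axis c (axis k 1))) = (\<lambda>s. f t x y)"
    unfolding vertically_constant_def by blast
  then show ?thesis unfolding dy_def by simp
qed

lemma vertically_constant_dx:
  assumes "vertically_constant f"
  shows "vertically_constant (dx k f)"
proof -
  have "(\<lambda>s. f t (x + s *\<^sub>R axis k 1) y) = (\<lambda>s. f t (x + s *\<^sub>R axis k 1) y')" for t x y y'
    using assms unfolding vertically_constant_def by blast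
  then show ?thesis
    unfolding vertically_constant_def dx_def by metis
qed

lemma vertically_constant_dt:
  assumes "vertically_constant f"
  shows "vertically_constant (dt k f)"
proof -
  have "(\<lambda>s. f (t + s *\<^sub>R axis k 1) x y) = (\<lambda>s. f (t + s *\<^sub>R axis k 1) x y')" for t x y y'
    using assms unfolding vertically_constant_def by blast
  then show ?thesis
    unfolding vertically_constant_def dt_def by metis
qed

lemma deltax_vertically_constant: "vertically_constant f \<Longrightarrow> deltax g k f t x y = dx k f t x y"
  unfolding deltax_def by (simp add: dy_vertically_constant)

lemma deltat_vertically_constant: "vertically_constant f \<Longrightarrow> deltat h k f t x y = dt k f t x y"
  unfolding deltat_def by (simp add: dy_vertically_constant)

lemma vertically_constant_gm: "vertically_constant (gm h Gq i j)"
  unfolding vertically_constant_def gm_def by simp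

context
  fixes g :: "'n::finite \<Rightarrow> 'n \<Rightarrow> ('p::finite, 'n) jfun"
  assumes g_vc: "\<And>i j. vertically_constant (g i j)"
begin

lemma vertically_constant_ginv: "vertically_constant (ginv g i j)"
proof -
  have "(\<chi> k l. g k l t x y) = (\<chi> k l. g k l t x y')" for t x y y'
    using g_vc unfolding vertically_constant_def by (simp add: vec_eq_iff)
  then show ?thesis
    unfolding vertically_constant_def ginv_def by metis
qed

lemma CC_vanishes: "CC g l i c k = (\<lambda>t x y. 0)"
  unfolding CC_def by (intro ext) (simp add: dy_vertically_constant g_vc)

lemma vertically_constant_LL: "vertically_constant (LL g l i j)"
proof -
  have dxg: "dx k (g i j) t x y = dx k (g i j) t x y'" for k i j t x y y'
    using vertically_constant_dx[OF g_vc] by (rule vertically_constantD)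
  have ginv: "ginv g i j t x y = ginv g i j t x y'" for i j t x y y'
    using vertically_constant_ginv by (rule vertically_constantD)
  have "LL g l i j t x y = LL g l i j t x y'" for t x y y'
    unfolding LL_def by (simp add: deltax_vertically_constant g_vc dxg[of _ _ _ t x y y'] ginv[of _ _ t x y y'])
  then show ?thesis
    unfolding vertically_constant_def by blast
qed

lemma vertically_constant_GG: "vertically_constant (GG h g l i b)"
proof -
  have dtg: "dt c (g i j) t x y = dt c (g i j) t x y'" for c i j t x y y'
    using vertically_constant_dt[OF g_vc] by (rule vertically_constantD)
  have ginv: "ginv g i j t x y = ginv g i j t x y'" for i j t x y y'
    using vertically_constant_ginv by (rule vertically_constantD)
  have "GG h g l i b t x y = GG h g l i b t x y'" for t x y y'
    unfolding GG_def by (simp add: deltat_vertically_constant g_vc dtg[of _ _ _ t x y y'] ginv[of _ _ t x y y'])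
  then show ?thesis
    unfolding vertically_constant_def by blast
qed

lemma Px_vanishes: "Px g l i j c k t x y = 0"
  unfolding Px_def CbarX_def
  by (simp add: CC_vanishes dy_vertically_constant vertically_constant_LL
      deltax_vertically_constant vertically_constant_const dx_def)

lemma Pt_vanishes: "Pt h g l i b c k t x y = 0"
  unfolding Pt_def CslashT_def
  by (simp add: CC_vanishes dy_vertically_constant vertically_constant_GG
      deltat_vertically_constant vertically_constant_const dt_def)

lemma SS_vanishes: "SS g l i b j c k t x y = 0"
  unfolding SS_def by (simp add: CC_vanishes dy_vertically_constant vertically_constant_const)

end

theorem mainTheorem3:
  fixes h :: "real^'p::finite \<Rightarrow> 'p \<Rightarrow> 'p \<Rightarrow> real"
    and Gq :: "(real^'p) \<times> (real^'n::finite) \<Rightarrow> 'p \<Rightarrow> 'p \<Rightarrow> 'n \<Rightarrow> 'n \<Rightarrow> real"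
    and DT :: "(real^'p) set" and DM :: "(real^'n) set"
  assumes "open DT" and "open DM"
    and h_smooth: "\<And>a b. smooth_on DT (\<lambda>t. h t a b)"
    and h_sym: "\<And>t a b. t \<in> DT \<Longrightarrow> h t a b = h t b a"
    and h_nondeg: "\<And>t. t \<in> DT \<Longrightarrow> det (\<chi> a b. h t a b) \<noteq> 0"
    and G_smooth: "\<And>a b i j. smooth_on (DT \<times> DM) (\<lambda>z. Gq z a b i j)"
    and G_sym: "\<And>t x a b i j. t \<in> DT \<Longrightarrow> x \<in> DM \<Longrightarrow> Gq (t, x) a b i j = Gq (t, x) b a j i"
    and g_nondeg: "\<And>t x y. t \<in> DT \<Longrightarrow> x \<in> DM \<Longrightarrow> det (\<chi> i j. gm h Gq i j t x y) \<noteq> 0"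
    and "t \<in> DT" and "x \<in> DM"
  shows "Ric_tt h a b t x y = (\<Sum>u\<in>UNIV. HR h u a b u t x y)
    \<and> Ric_yx (gm h Gq) a i j t x y = - (\<Sum>m\<in>UNIV. Px (gm h Gq) m i m a j t x y)
    \<and> Ric_yx (gm h Gq) a i j t x y = 0
    \<and> Ric_xy (gm h Gq) a i j t x y = (\<Sum>m\<in>UNIV. Px (gm h Gq) m i j a m t x y)
    \<and> Ric_xy (gm h Gq) a i j t x y = 0
    \<and> Ric_ty h (gm h Gq) a i b t x y = (\<Sum>m\<in>UNIV. Pt h (gm h Gq) m i b a m t x y)
    \<and> Ric_ty h (gm h Gq) a i b t x y = 0
    \<and> Ric_yy (gm h Gq) a b i j t x y = (\<Sum>m\<in>UNIV. SS (gm h Gq) m i b j a m t x y)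
    \<and> Ric_yy (gm h Gq) a b i j t x y = 0
    \<and> Ric_xt h (gm h Gq) i a t x y = (\<Sum>m\<in>UNIV. Rtx h (gm h Gq) m i a m t x y)
    \<and> Ric_xx h (gm h Gq) i j t x y = (\<Sum>m\<in>UNIV. Rxx h (gm h Gq) m i j m t x y)"
proof -
  note vanishing =
    Px_vanishes[OF vertically_constant_gm] Pt_vanishes[OF vertically_constant_gm]
    SS_vanishes[OF vertically_constant_gm]
  show ?thesis
    by (simp add: Ric_tt_def Ric_yx_def Ric_xy_def Ric_ty_def Ric_yy_def Ric_xt_def Ric_xx_def
        vanishing)
qed

end
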